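(* Let $q=p^n$ be a prime power and $g\ge 2$. Let $P(t)$ be a Weil polynomial of degree $2g$, written as $P(t)=\prod_{i=1}^g(t^2+x_it+q)$ where $x_i=-(\omega_i+\overline{\omega_i})$ and $\omega_1,\overline{\omega_1},\dots,\omega_g,\overline{\omega_g}$ are its roots, and let $f(t)=\prod_{i=1}^g(t+x_i)$ (a monic polynomial with integer coefficients). Suppose $P(t)\neq (t-\sqrt q)^2(t+\sqrt q)^2$. Then $P(t)$ is irreducible over $\mathbb{Q}$ if and only if $f(t)$ is irreducible over $\mathbb{Q}$.
   Context: A $q$-Weil number is an algebraic integer $\omega$ such that $|\iota(\omega)|=\sqrt q$ for every embedding $\iota:\mathbb{Q}(\omega)\to\mathbb{C}$. A Weil polynomial (of degree $2g$, for the prime power $q$) is a monic polynomial with integer coefficients whose multiset of complex roots can be written as $\{\omega_1,\overline{\omega_1},\dots,\omega_g,\overline{\omega_g}\}$ with each $\omega_i$ a $q$-Weil number. *)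

theory Defs
  imports "HOL-Computational_Algebra.Computational_Algebra" "HOL-Analysis.Analysis"
begin

definition alg_integer :: "complex \<Rightarrow> bool" where
  "alg_integer \<omega> \<longleftrightarrow> (\<exists>p :: int poly. lead_coeff p = 1 \<and> poly (map_poly of_int p) \<omega> = 0)"

text \<open>The subfield Q(omega) of the complex numbers (omega algebraic).\<close>
definition Q_adj :: "complex \<Rightarrow> complex set" where
  "Q_adj \<omega> = {poly (map_poly of_rat p) \<omega> | p :: rat poly. True}"

definition embedding_on :: "complex set \<Rightarrow> (complex \<Rightarrow> complex) \<Rightarrow> bool" where
  "embedding_on K \<iota> \<longleftrightarrow> \<iota> 1 = 1 \<and>
     (\<forall>a\<in>K. \<forall>b\<in>K. \<iota> (a + b) = \<iota> a + \<iota> b \<and> \<iota> (a * b) = \<iota> a * \<iota> b)"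

definition weil_number :: "nat \<Rightarrow> complex \<Rightarrow> bool" where
  "weil_number q \<omega> \<longleftrightarrow> alg_integer \<omega> \<and>
     (\<forall>\<iota>. embedding_on (Q_adj \<omega>) \<iota> \<longrightarrow> norm (\<iota> \<omega>) = sqrt (real q))"

definition weil_poly :: "nat \<Rightarrow> nat \<Rightarrow> int poly \<Rightarrow> bool" where
  "weil_poly q g P \<longleftrightarrow> lead_coeff P = 1 \<and> degree P = 2 * g \<and>
     (\<exists>\<omega> :: nat \<Rightarrow> complex. (\<forall>i<g. weil_number q (\<omega> i)) \<and>
        map_poly of_int P = (\<Prod>i<g. [:- \<omega> i, 1:] * [:- cnj (\<omega> i), 1:]))"

end

theory Submission
  imports Defs
    "Berlekamp_Zassenhaus.Unique_Factorization"
    "HOL-Computational_Algebra.Field_as_Ring"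
begin

(* Write a_i = w_i + cnj w_i, so that f(t) = prod (t - a_i) and, since w_i cnj w_i = q,
   P(t) = prod (t^2 - a_i t + q).  Hence P(t) = t^g f(t + q/t); we call h(t) |-> t^deg h h(t + c/t)
   the quadratic lift with parameter c.

   (1) The quadratic lift is multiplicative and doubles degrees, so a factorisation of f over Q
       lifts to one of P: if P is irreducible, so is f.

   (2) Suppose f is irreducible.  Every rational polynomial A can be reduced modulo the quadratic
       relation b^2 = u b - c, i.e. A(b) = S(u) b + R(u) with rational S, R.  If A vanishes at one
       non-real w_i, then S(a_i) = R(a_i) = 0 (otherwise w_i = -R(a_i)/S(a_i) would be real), so f
       divides S and R and A vanishes at all 2g roots of P, which are pairwise distinct because f is
       separable.  Thus no proper factor of P exists.  If some w_j is real, then a_j^2 = 4q forces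
       f = t^2 - 4q and P = (t - sqrt q)^2 (t + sqrt q)^2, the excluded case. *)

interpretation of_rat_poly_hom: map_poly_inj_idom_hom "of_rat :: rat \<Rightarrow> 'a::field_char_0" ..

(* The quadratic lift  h(t) |-> t^(deg h) * h(t + c/t),  written without division. *)
definition quad_lift :: "'a::comm_ring_1 \<Rightarrow> 'a poly \<Rightarrow> 'a poly" where
  "quad_lift c h =
     (\<Sum>k\<le>degree h. smult (coeff h k) (monom 1 (degree h - k) * [:c, 0, 1:] ^ k))"

lemma (in map_poly_inj_comm_ring_hom) map_poly_quad_lift:
  "map_poly hom (quad_lift c h) = quad_lift (hom c) (map_poly hom h)"
  unfolding quad_lift_def by (simp add: hom_distribs)

lemma poly_quad_lift:
  fixes c x :: "'a::field"
  assumes "x \<noteq> 0"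
  shows "poly (quad_lift c h) x = x ^ degree h * poly h (x + c / x)"
proof -
  have "poly (quad_lift c h) x = (\<Sum>k\<le>degree h. coeff h k * (x ^ (degree h - k) * (x\<^sup>2 + c) ^ k))"
    unfolding quad_lift_def by (simp add: poly_sum poly_monom power2_eq_square algebra_simps)
  also have "\<dots> = (\<Sum>k\<le>degree h. x ^ degree h * (coeff h k * (x + c / x) ^ k))"
  proof (rule sum.cong[OF refl])
    fix k assume "k \<in> {..degree h}"
    then have "x ^ degree h = x ^ (degree h - k) * x ^ k"
      by (simp flip: power_add)
    moreover have "x ^ k * (x + c / x) ^ k = (x\<^sup>2 + c) ^ k"
      using assms by (simp flip: power_mult_distrib add: field_simps power2_eq_square)
    ultimately show "coeff h k * (x ^ (degree h - k) * (x\<^sup>2 + c) ^ k)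
        = x ^ degree h * (coeff h k * (x + c / x) ^ k)"
      by (simp add: algebra_simps)
  qed
  also have "\<dots> = x ^ degree h * poly h (x + c / x)"
    by (simp add: poly_altdef sum_distrib_left)
  finally show ?thesis .
qed

(* The lift doubles degrees: the summand k = deg h alone reaches degree 2 deg h. *)
lemma degree_quad_lift:
  fixes h :: "'a::idom poly"
  shows "degree (quad_lift c h) = 2 * degree h"
proof (cases "degree h = 0")
  case True
  then show ?thesis by (simp add: quad_lift_def)
next
  case False
  define d where "d = degree h"
  define summand where "summand k = smult (coeff h k) (monom 1 (d - k) * [:c, 0, 1:] ^ k)" for k
  have split: "quad_lift c h = smult (lead_coeff h) ([:c, 0, 1:] ^ d) + (\<Sum>k<d. summand k)"
    unfolding quad_lift_def summand_def d_def by (simp flip: lessThan_Suc_atMost)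
  have lead: "degree (smult (lead_coeff h) ([:c, 0, 1:] ^ d)) = 2 * d"
    using False by (simp add: degree_power_eq d_def)
  have "degree (summand k) \<le> 2 * d - 1" if "k < d" for k
  proof -
    have "degree (summand k) \<le> (d - k) + 2 * k"
      unfolding summand_def
      by (intro order.trans[OF degree_smult_le] order.trans[OF degree_mult_le] add_mono
            degree_monom_le order.trans[OF degree_power_le]) simp
    then show ?thesis using that by linarith
  qed
  then have "degree (\<Sum>k<d. summand k) < 2 * d"
    using False d_def by (intro le_less_trans[OF degree_sum_le]) auto
  then show ?thesis
    unfolding split using lead d_def by (simp add: degree_add_eq_left)
qed

(* Over an infinite field, polynomials agreeing off 0 are equal; this transfers the
   pointwise formula for the lift to identities of polynomials. *)
lemma poly_eq_off_zero:
  fixes p r :: "'a::field_char_0 poly"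
  assumes "\<And>x. x \<noteq> 0 \<Longrightarrow> poly p x = poly r x"
  shows "p = r"
proof (rule ccontr)
  assume "p \<noteq> r"
  then have "finite {x. poly (p - r) x = 0}"
    by (intro poly_roots_finite) simp
  moreover have "UNIV - {0} \<subseteq> {x. poly (p - r) x = 0}"
    using assms by auto
  moreover have "infinite (UNIV - {0 :: 'a})"
    using infinite_UNIV_char_0 by simp
  ultimately show False
    using finite_subset by blast
qed

lemma quad_lift_mult:
  fixes h1 h2 :: "'a::field_char_0 poly"
  assumes "h1 \<noteq> 0" "h2 \<noteq> 0"
  shows "quad_lift c (h1 * h2) = quad_lift c h1 * quad_lift c h2"
  by (rule poly_eq_off_zero) (simp add: poly_quad_lift degree_mult_eq assms power_add)

lemma quad_lift_linear: "quad_lift c [:- a, 1:] = [:c, - a, 1 :: 'a::comm_ring_1:]"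
  by (simp add: quad_lift_def monom_Suc)

lemma quad_lift_const: "degree h = 0 \<Longrightarrow> quad_lift c h = h"
  by (simp add: quad_lift_def degree_0_id)

lemma quad_lift_prod_linear:
  fixes a :: "'b \<Rightarrow> 'a::field_char_0"
  shows "quad_lift c (\<Prod>i\<in>I. [:- a i, 1:]) = (\<Prod>i\<in>I. [:c, - a i, 1:])"
proof (induction I rule: infinite_finite_induct)
  case (insert i I)
  have nonzero: "[:- a i, 1:] \<noteq> 0" "(\<Prod>i\<in>I. [:- a i, 1:]) \<noteq> 0"
    using insert.hyps(1) by simp_all
  have "quad_lift c (\<Prod>i\<in>insert i I. [:- a i, 1:])
      = quad_lift c ([:- a i, 1:] * (\<Prod>i\<in>I. [:- a i, 1:]))"
    using insert.hyps by simp
  also have "\<dots> = [:c, - a i, 1:] * (\<Prod>i\<in>I. [:c, - a i, 1:])"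
    unfolding quad_lift_mult[OF nonzero] quad_lift_linear insert.IH by (rule refl)
  finally show ?case
    using insert.hyps by simp
qed (simp_all add: quad_lift_const)

(* A factorisation h = a b into non-units lifts to one of the lift (degrees double):
   irreducibility of the lift implies irreducibility of h. *)
lemma irreducible_quad_lift_imp_irreducible:
  fixes h :: "'a::field_char_0 poly"
  assumes irr: "irreducible (quad_lift c h)"
  shows "irreducible h"
proof (rule irreducibleI)
  show "h \<noteq> 0"
    using irr by (auto simp: quad_lift_def)
  show "\<not> is_unit h"
  proof
    assume "is_unit h"
    then have "is_unit (quad_lift c h)"
      by (simp add: is_unit_field_poly quad_lift_const)
    then show False using irr by (simp add: irreducible_def)
  qed
  fix a b assume "h = a * b"
  then have "quad_lift c h = quad_lift c a * quad_lift c b" "a \<noteq> 0" "b \<noteq> 0"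
    using \<open>h \<noteq> 0\<close> quad_lift_mult by auto
  then have "is_unit (quad_lift c a) \<or> is_unit (quad_lift c b)"
    using irreducibleD[OF irr] by blast
  then show "is_unit a \<or> is_unit b"
    using \<open>a \<noteq> 0\<close> \<open>b \<noteq> 0\<close> by (auto simp: is_unit_field_poly degree_quad_lift)
qed

(* Reduction modulo b^2 = u b - c: the coefficients (S_k, R_k) with b^k = S_k(u) b + R_k(u),
   computed by the recursion b^(k+1) = (u S_k + R_k) b - c S_k. *)
fun quad_power_coeffs :: "rat \<Rightarrow> nat \<Rightarrow> rat poly \<times> rat poly" where
  "quad_power_coeffs c 0 = (0, 1)"
| "quad_power_coeffs c (Suc k) =
     ([:0, 1:] * fst (quad_power_coeffs c k) + snd (quad_power_coeffs c k),
      smult (- c) (fst (quad_power_coeffs c k)))"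

lemma poly_power_quad:
  fixes \<beta> u :: "'a::field_char_0"
  assumes "\<beta>\<^sup>2 = u * \<beta> - of_rat c"
  shows "\<beta> ^ k = poly (map_poly of_rat (fst (quad_power_coeffs c k))) u * \<beta>
               + poly (map_poly of_rat (snd (quad_power_coeffs c k))) u"
proof (induction k)
  case (Suc k)
  let ?S = "poly (map_poly of_rat (fst (quad_power_coeffs c k))) u"
  let ?R = "poly (map_poly of_rat (snd (quad_power_coeffs c k))) u"
  have "\<beta> ^ Suc k = ?S * \<beta>\<^sup>2 + ?R * \<beta>"
    using Suc by (simp add: power2_eq_square algebra_simps)
  also have "\<dots> = (u * ?S + ?R) * \<beta> - of_rat c * ?S"
    unfolding assms by (simp add: algebra_simps)
  finally show ?case
    by (simp add: hom_distribs)
qed simp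

definition quad_rem_lin :: "rat \<Rightarrow> rat poly \<Rightarrow> rat poly" where
  "quad_rem_lin c A = (\<Sum>k\<le>degree A. smult (coeff A k) (fst (quad_power_coeffs c k)))"

definition quad_rem_const :: "rat \<Rightarrow> rat poly \<Rightarrow> rat poly" where
  "quad_rem_const c A = (\<Sum>k\<le>degree A. smult (coeff A k) (snd (quad_power_coeffs c k)))"

lemma poly_quad_rem:
  fixes \<beta> u :: "'a::field_char_0"
  assumes "\<beta>\<^sup>2 = u * \<beta> - of_rat c"
  shows "poly (map_poly of_rat A) \<beta>
       = poly (map_poly of_rat (quad_rem_lin c A)) u * \<beta> + poly (map_poly of_rat (quad_rem_const c A)) u"
proof -
  have "poly (map_poly of_rat A) \<beta> = (\<Sum>k\<le>degree A. of_rat (coeff A k) * \<beta> ^ k)"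
    by (simp add: poly_altdef)
  also have "\<dots> = poly (map_poly of_rat (quad_rem_lin c A)) u * \<beta>
                  + poly (map_poly of_rat (quad_rem_const c A)) u"
    unfolding poly_power_quad[OF assms] quad_rem_lin_def quad_rem_const_def
    by (simp add: hom_distribs poly_sum sum_distrib_right sum.distrib algebra_simps)
  finally show ?thesis .
qed

lemma degree_prod_linear:
  fixes a :: "'b \<Rightarrow> 'a::idom"
  shows "finite I \<Longrightarrow> degree (\<Prod>i\<in>I. [:- a i, 1:]) = card I"
  by (simp add: degree_prod_eq_sum_degree)

lemma dvd_of_rat_root:
  fixes F S :: "rat poly" and x :: "'a::field_char_0"
  assumes "F dvd S" "poly (map_poly of_rat F) x = 0"
  shows "poly (map_poly of_rat S) x = 0"
  using assms by (auto elim!: dvdE simp: of_rat_poly_hom.hom_mult)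

(* An irreducible rational polynomial divides every rational polynomial sharing one of its
   roots: otherwise a Bezout identity 1 = u F + v S would vanish at that root. *)
lemma irreducible_dvd_of_common_root:
  fixes F S :: "rat poly" and x :: "'a::field_char_0"
  assumes irr: "irreducible F"
    and F: "poly (map_poly of_rat F) x = 0" and S: "poly (map_poly of_rat S) x = 0"
  shows "F dvd S"
proof (rule ccontr)
  assume "\<not> F dvd S"
  then have "gcd F S = 1"
    using prime_elem_imp_coprime[OF irreducible_imp_prime_elem[OF irr]]
    by (simp add: coprime_iff_gcd_eq_1)
  then have "(1 :: 'a) = poly (map_poly of_rat
      (fst (bezout_coefficients F S) * F + snd (bezout_coefficients F S) * S)) x"
    by (simp add: bezout_coefficients_fst_snd)
  also have "\<dots> = 0"
    using F S by (simp add: hom_distribs)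
  finally show False by simp
qed

lemma degree_irreducible_pos:
  fixes F :: "'a::field poly"
  shows "irreducible F \<Longrightarrow> degree F \<noteq> 0"
  by (auto simp: irreducible_def is_unit_field_poly)

(* Irreducible rational polynomials are separable: F does not divide its nonzero derivative. *)
lemma irreducible_simple_root:
  fixes F :: "rat poly" and x :: "'a::field_char_0"
  assumes irr: "irreducible F" and root: "poly (map_poly of_rat F) x = 0"
  shows "poly (pderiv (map_poly of_rat F)) x \<noteq> 0"
proof
  assume "poly (pderiv (map_poly of_rat F)) x = 0"
  then have "poly (map_poly of_rat (pderiv F)) x = 0"
    by (simp add: of_rat_hom.map_poly_pderiv)
  then have "F dvd pderiv F"
    by (rule irreducible_dvd_of_common_root[OF irr root])
  then show False
    using not_dvd_pderiv degree_irreducible_pos[OF irr] by blast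
qed

lemma irreducible_roots_distinct:
  fixes F :: "rat poly" and a :: "'b \<Rightarrow> 'a::field_char_0"
  assumes irr: "irreducible F" and F: "map_poly of_rat F = (\<Prod>i\<in>I. [:- a i, 1:])"
    and "finite I"
  shows "inj_on a I"
proof (rule inj_onI, rule ccontr)
  fix j k assume jk: "j \<in> I" "k \<in> I" "a j = a k" "j \<noteq> k"
  then have "(\<Prod>i\<in>{j, k}. [:- a i, 1:]) dvd map_poly of_rat F"
    unfolding F using \<open>finite I\<close> by (intro prod_dvd_prod_subset) auto
  moreover define p where "p = [:- a j, 1:]"
  ultimately obtain R where "map_poly of_rat F = p * p * R"
    using jk by (auto elim: dvdE)
  moreover have "poly p (a j) = 0"
    by (simp add: p_def)
  ultimately have "poly (map_poly of_rat F) (a j) = 0" "poly (pderiv (map_poly of_rat F)) (a j) = 0"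
    by (simp_all add: pderiv_mult)
  then show False
    using irreducible_simple_root[OF irr] by blast
qed

(* If an irreducible rational polynomial of degree g >= 2 has a root whose square is rational,
   it divides t^2 - d, so g = 2 and its two roots are the two square roots of d. *)
lemma irreducible_root_of_square:
  fixes F :: "rat poly" and a :: "nat \<Rightarrow> 'a::field_char_0" and d :: rat
  assumes irr: "irreducible F" and roots: "map_poly of_rat F = (\<Prod>i<g. [:- a i, 1:])"
    and "2 \<le> g" and "j < g" and square: "(a j)\<^sup>2 = of_rat d"
  shows "g = 2 \<and> a 1 = - a 0 \<and> (a 0)\<^sup>2 = of_rat d"
proof -
  define G where "G = [:- d, 0, 1:]"
  have G_eval: "poly (map_poly of_rat G) x = x\<^sup>2 - of_rat d" for x :: 'a
    by (simp add: G_def power2_eq_square of_rat_minus)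
  have a_root: "poly (map_poly of_rat F) (a i) = 0" if "i < g" for i
    using that unfolding roots by (auto simp: poly_prod)
  have "F dvd G"
    using square G_eval by (intro irreducible_dvd_of_common_root[OF irr a_root[OF \<open>j < g\<close>]]) simp
  then have "degree F \<le> degree G"
    by (rule dvd_imp_degree_le) (simp add: G_def)
  moreover have "degree F = g"
    using arg_cong[OF roots, of degree] by (simp add: degree_prod_linear)
  ultimately have "g = 2"
    using \<open>2 \<le> g\<close> by (simp add: G_def)
  have "(a i)\<^sup>2 = of_rat d" if "i < g" for i
    using dvd_of_rat_root[OF \<open>F dvd G\<close> a_root[OF that]] G_eval by simp
  then have same_square: "(a 1)\<^sup>2 = (a 0)\<^sup>2" and "(a 0)\<^sup>2 = of_rat d"
    using \<open>g = 2\<close> by simp_all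
  moreover have "a 1 \<noteq> a 0"
    using inj_onD[OF irreducible_roots_distinct[OF irr roots], of 1 0] \<open>g = 2\<close> by auto
  ultimately show ?thesis
    using \<open>g = 2\<close> power2_eq_iff[THEN iffD1, OF same_square] by simp
qed

lemma cnj_of_rat [simp]: "cnj (of_rat r) = of_rat r"
  by (cases r) (simp add: of_rat_rat)

lemma cnj_poly_of_rat: "cnj (poly (map_poly of_rat p) z) = poly (map_poly of_rat p) (cnj z)"
  by (simp add: poly_cnj map_poly_map_poly o_def)

lemma mult_linear_factors: "[:- x, 1:] * [:- y, 1:] = [:x * y, - (x + y), 1 :: 'a::comm_ring_1:]"
  by (simp add: algebra_simps)

lemma quad_lift_of_conjugate_pairs:
  fixes F P :: "rat poly" and c :: rat and a \<omega> :: "nat \<Rightarrow> complex"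
  assumes F: "map_poly of_rat F = (\<Prod>i<g. [:- a i, 1:])"
    and P: "map_poly of_rat P = (\<Prod>i<g. [:- \<omega> i, 1:] * [:- cnj (\<omega> i), 1:])"
    and trace: "\<And>i. i < g \<Longrightarrow> a i = \<omega> i + cnj (\<omega> i)"
    and norm: "\<And>i. i < g \<Longrightarrow> \<omega> i * cnj (\<omega> i) = of_rat c"
  shows "P = quad_lift c F"
proof -
  have "map_poly of_rat P = (\<Prod>i<g. [:of_rat c, - a i, 1:] :: complex poly)"
    unfolding P using trace norm by (intro prod.cong) (simp_all add: mult_linear_factors mult.commute)
  also have "\<dots> = map_poly of_rat (quad_lift c F)"
    by (simp add: of_rat_poly_hom.map_poly_quad_lift F quad_lift_prod_linear)
  finally show ?thesis
    by simp
qed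

lemma quartic_double_roots:
  fixes a r :: "'a::idom"
  assumes "a\<^sup>2 = 4 * r\<^sup>2"
  shows "[:r\<^sup>2, - a, 1:] * [:r\<^sup>2, a, 1:] = [:- r, 1:]\<^sup>2 * [:r, 1:]\<^sup>2"
proof -
  have "a\<^sup>2 = (2 * r)\<^sup>2"
    using assms by (simp add: power_mult_distrib)
  then have "a = 2 * r \<or> a = - (2 * r)"
    by (rule power2_eq_iff[THEN iffD1])
  then show ?thesis
    by (auto simp: power2_eq_square algebra_simps)
qed

(* Real conjugate pairs.  If the trace polynomial prod (t - a_i) is irreducible of degree g >= 2
   and some w_j is real, then a_j^2 = 4q, so g = 2 and the pairs multiply to the excluded quartic. *)
lemma real_conjugate_pair_degenerate:
  fixes F :: "rat poly" and q :: nat and a \<omega> :: "nat \<Rightarrow> complex"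
  assumes irr: "irreducible F" and roots: "map_poly of_rat F = (\<Prod>i<g. [:- a i, 1:])"
    and trace: "\<And>i. i < g \<Longrightarrow> a i = \<omega> i + cnj (\<omega> i)"
    and norm: "\<And>i. i < g \<Longrightarrow> \<omega> i * cnj (\<omega> i) = of_nat q"
    and "2 \<le> g" and j: "j < g" and real: "cnj (\<omega> j) = \<omega> j"
  shows "(\<Prod>i<g. [:- \<omega> i, 1:] * [:- cnj (\<omega> i), 1:])
       = [:- complex_of_real (sqrt (real q)), 1:]\<^sup>2 * [:complex_of_real (sqrt (real q)), 1:]\<^sup>2"
proof -
  have "(a j)\<^sup>2 = of_rat (4 * of_nat q)"
    using trace[OF j] norm[OF j] real by (simp add: power2_eq_square of_rat_mult)
  from irreducible_root_of_square[OF irr roots \<open>2 \<le> g\<close> j this]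
  have "g = 2" and opposite: "a 1 = - a 0" and square: "(a 0)\<^sup>2 = 4 * of_nat q"
    by (simp_all add: of_rat_mult)
  define r where "r = complex_of_real (sqrt (real q))"
  have "r\<^sup>2 = of_nat q"
    by (simp add: r_def flip: of_real_power)
  have "(\<Prod>i<g. [:- \<omega> i, 1:] * [:- cnj (\<omega> i), 1:]) = (\<Prod>i<g. [:of_nat q, - a i, 1:])"
    using trace norm by (intro prod.cong) (simp_all add: mult_linear_factors mult.commute)
  also have "\<dots> = [:r\<^sup>2, - a 0, 1:] * [:r\<^sup>2, a 0, 1:]"
    using \<open>r\<^sup>2 = of_nat q\<close> opposite \<open>g = 2\<close> by (simp add: lessThan_nat_numeral)
  also have "\<dots> = [:- r, 1:]\<^sup>2 * [:r, 1:]\<^sup>2"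
    using square \<open>r\<^sup>2 = of_nat q\<close> by (intro quartic_double_roots) simp
  finally show ?thesis
    unfolding r_def .
qed

context
  fixes F :: "rat poly" and c :: rat and g :: nat and a \<omega> :: "nat \<Rightarrow> complex"
  assumes irreducible: "irreducible F"
    and roots: "map_poly of_rat F = (\<Prod>i<g. [:- a i, 1:])"
    and trace: "\<And>i. i < g \<Longrightarrow> a i = \<omega> i + cnj (\<omega> i)"
    and norm: "\<And>i. i < g \<Longrightarrow> \<omega> i * cnj (\<omega> i) = of_rat c"
    and nonreal: "\<And>i. i < g \<Longrightarrow> cnj (\<omega> i) \<noteq> \<omega> i"
begin

lemma lift_root_quadratic:
  assumes "i < g" "\<beta> \<in> {\<omega> i, cnj (\<omega> i)}"
  shows "\<beta>\<^sup>2 = a i * \<beta> - of_rat c"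
  using assms trace[OF assms(1)] norm[OF assms(1)] by (auto simp: power2_eq_square algebra_simps)

(* A rational polynomial vanishing at one w_i vanishes at every w_j and cnj w_j: write
   A(b) = S(a_i) b + R(a_i); as w_i is not real, S(a_i) = R(a_i) = 0, so the irreducible
   trace polynomial divides S and R, which therefore vanish at every a_j. *)
lemma lift_root_propagates:
  fixes A :: "rat poly"
  assumes i: "i < g" and root: "poly (map_poly of_rat A) (\<omega> i) = 0"
    and j: "j < g" and \<beta>: "\<beta> \<in> {\<omega> j, cnj (\<omega> j)}"
  shows "poly (map_poly of_rat A) \<beta> = 0"
proof -
  define S where "S = quad_rem_lin c A"
  define R where "R = quad_rem_const c A"
  have eval: "poly (map_poly of_rat A) \<gamma> = poly (map_poly of_rat S) (a k) * \<gamma> + poly (map_poly of_rat R) (a k)"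
    if "k < g" "\<gamma> \<in> {\<omega> k, cnj (\<omega> k)}" for k \<gamma>
    unfolding S_def R_def by (rule poly_quad_rem[OF lift_root_quadratic[OF that]])
  have S_root: "poly (map_poly of_rat S) (a i) = 0"
  proof (rule ccontr)
    let ?s = "poly (map_poly of_rat S) (a i)" and ?r = "poly (map_poly of_rat R) (a i)"
    assume "?s \<noteq> 0"
    moreover have "?s * \<omega> i + ?r = 0"
      using eval[OF i] root by simp
    ultimately have \<omega>_eq: "\<omega> i = - ?r / ?s"
      by (simp add: field_simps add_eq_0_iff)
    have "cnj (a i) = a i"
      using trace[OF i] by simp
    then have "cnj ?s = ?s" "cnj ?r = ?r"
      by (simp_all add: cnj_poly_of_rat)
    then have "cnj (\<omega> i) = \<omega> i"
      unfolding \<omega>_eq by simp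
    then show False
      using nonreal[OF i] by contradiction
  qed
  then have R_root: "poly (map_poly of_rat R) (a i) = 0"
    using eval[OF i] root by simp
  have a_root: "poly (map_poly of_rat F) (a k) = 0" if "k < g" for k
    using that unfolding roots by (auto simp: poly_prod)
  have "F dvd S" "F dvd R"
    using S_root R_root by (auto intro: irreducible_dvd_of_common_root[OF irreducible a_root[OF i]])
  then have "poly (map_poly of_rat S) (a j) = 0" "poly (map_poly of_rat R) (a j) = 0"
    using dvd_of_rat_root a_root[OF j] by blast+
  then show ?thesis
    using eval[OF j \<beta>] by simp
qed

(* The 2g numbers w_i, cnj w_i are pairwise distinct, since the a_i are. *)
lemma card_lift_roots: "card (\<omega> ` {..<g} \<union> (\<lambda>i. cnj (\<omega> i)) ` {..<g}) = 2 * g"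
proof -
  have a_inj: "inj_on a {..<g}"
    using irreducible_roots_distinct[OF irreducible roots] by simp
  have same_index: "j = k" if "j < g" "k < g" "a j = a k" for j k
    using inj_onD[OF a_inj] that by simp
  have "inj_on \<omega> {..<g}" "inj_on (\<lambda>i. cnj (\<omega> i)) {..<g}"
    using same_index trace by (auto intro!: inj_onI)
  moreover have "\<omega> j \<noteq> cnj (\<omega> k)" if "j < g" "k < g" for j k
  proof
    assume "\<omega> j = cnj (\<omega> k)"
    then have "a j = a k"
      using trace that by (simp add: add.commute)
    then show False
      using same_index nonreal that \<open>\<omega> j = cnj (\<omega> k)\<close> by metis
  qed
  then have "\<omega> ` {..<g} \<inter> (\<lambda>i. cnj (\<omega> i)) ` {..<g} = {}"
    by blast
  ultimately show ?thesis
    by (simp add: card_Un_disjoint card_image)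
qed

(* Hence every nonconstant rational divisor of prod (t - w_i)(t - cnj w_i) has all 2g of
   its roots (one root suffices, by conjugation and propagation). *)
lemma lift_factor_degree:
  fixes A P :: "rat poly"
  assumes P: "map_poly of_rat P = (\<Prod>i<g. [:- \<omega> i, 1:] * [:- cnj (\<omega> i), 1:])"
    and "A dvd P" and "degree A \<noteq> 0"
  shows "2 * g \<le> degree A"
proof -
  have "A \<noteq> 0"
    using \<open>degree A \<noteq> 0\<close> by auto
  obtain x where x: "poly (map_poly of_rat A) x = (0 :: complex)"
    using fundamental_theorem_of_algebra[of "map_poly of_rat A"] \<open>degree A \<noteq> 0\<close>
    by (auto simp: constant_degree)
  then have "poly (map_poly of_rat P) x = 0"
    by (rule dvd_of_rat_root[OF \<open>A dvd P\<close>])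
  moreover have "poly ([:- \<omega> i, 1:] * [:- cnj (\<omega> i), 1:]) x = (x - \<omega> i) * (x - cnj (\<omega> i))" for i
    by (simp add: algebra_simps)
  ultimately obtain i where i: "i < g" and "x = \<omega> i \<or> x = cnj (\<omega> i)"
    unfolding P poly_prod by (auto simp: prod_zero_iff)
  then have "poly (map_poly of_rat A) (\<omega> i) = 0"
    using x cnj_poly_of_rat[of A x] by auto
  then have "\<omega> ` {..<g} \<union> (\<lambda>i. cnj (\<omega> i)) ` {..<g} \<subseteq> {x. poly (map_poly of_rat A) x = 0}"
    using lift_root_propagates[OF i] by auto
  then have "card (\<omega> ` {..<g} \<union> (\<lambda>i. cnj (\<omega> i)) ` {..<g})
      \<le> card {x. poly (map_poly of_rat A) x = (0 :: complex)}"
    using \<open>A \<noteq> 0\<close> by (intro card_mono poly_roots_finite) auto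
  also have "\<dots> \<le> degree A"
    using card_poly_roots_bound[of "map_poly of_rat A"] \<open>A \<noteq> 0\<close> by simp
  finally show ?thesis
    by (simp add: card_lift_roots)
qed

lemma irreducible_lift:
  fixes P :: "rat poly"
  assumes P: "map_poly of_rat P = (\<Prod>i<g. [:- \<omega> i, 1:] * [:- cnj (\<omega> i), 1:])"
  shows "irreducible P"
proof (rule irreducibleI)
  have "degree (map_poly of_rat F :: complex poly) = g"
    unfolding roots by (simp add: degree_prod_linear)
  then have "g \<noteq> 0"
    using degree_irreducible_pos[OF irreducible] by simp
  have "degree (map_poly of_rat P :: complex poly) = 2 * g"
    unfolding P by (subst degree_prod_eq_sum_degree) (auto simp: degree_mult_eq)
  then have deg_P: "degree P = 2 * g"
    by simp
  then show P0: "P \<noteq> 0" and "\<not> is_unit P"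
    using \<open>g \<noteq> 0\<close> by (auto simp: is_unit_field_poly)
  fix A B assume AB: "P = A * B"
  show "is_unit A \<or> is_unit B"
  proof (rule ccontr)
    assume "\<not> (is_unit A \<or> is_unit B)"
    then have "degree A \<noteq> 0" "degree B \<noteq> 0"
      using AB P0 by (auto simp: is_unit_field_poly)
    then have "2 * g \<le> degree A" "2 * g \<le> degree B"
      using AB by (auto intro!: lift_factor_degree[OF P])
    moreover have "degree P = degree A + degree B"
      using AB P0 by (auto simp: degree_mult_eq)
    ultimately show False
      using deg_P \<open>g \<noteq> 0\<close> by simp
  qed
qed

end

lemma of_rat_of_int_poly: "map_poly of_rat (map_poly of_int p) = map_poly of_int p"
  by (simp add: map_poly_map_poly o_def)

lemma weil_number_mult_cnj:
  assumes "weil_number q \<omega>"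
  shows "\<omega> * cnj \<omega> = of_nat q"
proof -
  have "embedding_on (Q_adj \<omega>) id"
    by (simp add: embedding_on_def)
  then have "norm \<omega> = sqrt (real q)"
    using assms unfolding weil_number_def by (metis id_apply)
  then have "\<omega> * cnj \<omega> = of_real ((sqrt (real q))\<^sup>2)"
    by (metis complex_norm_square)
  then show ?thesis
    by simp
qed

theorem mainTheorem3:
  fixes p n q g :: nat and P f :: "int poly" and \<omega> :: "nat \<Rightarrow> complex"
  assumes "prime p" and "n \<ge> 1" and "q = p ^ n" and "g \<ge> 2"
    and "weil_poly q g P"
    and "\<forall>i<g. weil_number q (\<omega> i)"
    and "map_poly of_int P = (\<Prod>i<g. [:- \<omega> i, 1:] * [:- cnj (\<omega> i), 1:])"
    and "map_poly of_int f = (\<Prod>i<g. [:- (\<omega> i + cnj (\<omega> i)), 1:])"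
    and "map_poly (of_int :: int \<Rightarrow> complex) P \<noteq>
           [:- complex_of_real (sqrt (real q)), 1:] ^ 2 * [:complex_of_real (sqrt (real q)), 1:] ^ 2"
  shows "irreducible (map_poly (of_int :: int \<Rightarrow> rat) P) \<longleftrightarrow>
         irreducible (map_poly (of_int :: int \<Rightarrow> rat) f)"
proof -
  define a where "a i = \<omega> i + cnj (\<omega> i)" for i
  define PQ FQ :: "rat poly" where "PQ = map_poly of_int P" and "FQ = map_poly of_int f"
  have norm: "\<omega> i * cnj (\<omega> i) = of_nat q" if "i < g" for i
    using weil_number_mult_cnj assms(6) that by simp
  have F_roots: "map_poly of_rat FQ = (\<Prod>i<g. [:- a i, 1:])"
    using assms(8) by (simp add: FQ_def a_def of_rat_of_int_poly)
  have P_roots: "map_poly of_rat PQ = (\<Prod>i<g. [:- \<omega> i, 1:] * [:- cnj (\<omega> i), 1:])"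
    using assms(7) by (simp add: PQ_def of_rat_of_int_poly)
  have lift: "PQ = quad_lift (of_nat q) FQ"
    using quad_lift_of_conjugate_pairs[OF F_roots P_roots] by (simp add: a_def norm)
  show ?thesis
    unfolding PQ_def[symmetric] FQ_def[symmetric]
  proof
    assume "irreducible PQ"
    then show "irreducible FQ"
      unfolding lift by (rule irreducible_quad_lift_imp_irreducible)
  next
    assume irr: "irreducible FQ"
    have nonreal: "cnj (\<omega> j) \<noteq> \<omega> j" if "j < g" for j
      using real_conjugate_pair_degenerate[OF irr F_roots _ norm \<open>g \<ge> 2\<close> that] assms(7,9) a_def
      by auto
    show "irreducible PQ"
      using irreducible_lift[OF irr F_roots, of \<omega> "of_nat q"] nonreal P_roots by (simp add: a_def norm)
  qed
qed

end
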